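(* Let $V$ be a finite family of L-frames all anchored at $D$ from above, $G$ its intersection graph, and $\mathcal B,\mathcal R\subseteq V$ disjoint dominating sets of $G$. Let $H=(\mathcal B\cup\mathcal R,E')$ be the bipartite graph and its drawing defined in the context. Then in this drawing no two arcs cross except at common endpoints: no two top arcs cross, no two down arcs cross, no mixed arc crosses a top arc, no mixed arc crosses a down arc, and no two mixed arcs cross. In particular $H$ is planar.
   Context: Fix a line $D$ of slope $-1$. An L-frame is the union of a closed horizontal segment and a closed vertical segment sharing an endpoint, its corner $\mathrm{cor}(\cdot)$. An L-frame is anchored at $D$ from above if its corner is on $D$, its horizontal segment goes right from the corner and its vertical segment goes up. For intersecting L-frames $L_1,L_2$ anchored from above, $L_1$ intersects $L_2$ from the left if $x(\mathrm{cor}(L_1))\le x(\mathrm{cor}(L_2))$, and from below if $x(\mathrm{cor}(L_1))\ge x(\mathrm{cor}(L_2))$. Definition of $H$: for each $u\in V$, among all pairs $(b,r)\in\mathcal B\times\mathcal R$ such that both $b$ and $r$ intersect $u$ (an L-frame intersects itself), choose one pair minimizing the Euclidean distance $\mathrm{dist}(\mathrm{cor}(b),\mathrm{cor}(r))$ and put $(b,r)$ in $E'$; $u$ is called a witness of $(b,r)$. An arc $(b,r)\in E'$ is a top arc if it has a witness $u$ that both $b$ and $r$ intersect from the left (fix such $u$ as $w(b,r)$); otherwise it is a down arc if it has a witness $v$ that both $b$ and $r$ intersect from below (fix such $v$ as $w(b,r)$); otherwise it is a mixed arc, and $w(b,r)$ is any witness (which $b$ and $r$ intersect from different sides). Drawing: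 vertex $u$ is placed at $\mathrm{cor}(u)\in D$. For an arc $(p,q)$ with $x(\mathrm{cor}(p))<x(\mathrm{cor}(q))$: a top (resp. down) arc is drawn as the half of the circle with diameter segment $\mathrm{cor}(p)\mathrm{cor}(q)$ lying above (resp. below) $D$. For a mixed arc, where $p$ intersects $w=w(p,q)$ from the left and $q$ intersects $w$ from below (so $x(\mathrm{cor}(p))<x(\mathrm{cor}(w))<x(\mathrm{cor}(q))$), it is drawn as the half of the circle with diameter $\mathrm{cor}(p)\mathrm{cor}(w)$ above $D$ followed by the half of the circle with diameter $\mathrm{cor}(w)\mathrm{cor}(q)$ below $D$. *)

theory Defs
  imports "HOL-Analysis.Analysis"
begin

definition lineD :: "real \<Rightarrow> (real \<times> real) set" where
  "lineD c = {p. fst p + snd p = c}"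

text \<open>An L-frame whose horizontal segment goes right from its corner and whose
  vertical segment goes up from its corner is described by the triple
  (corner, length of horizontal segment, length of vertical segment).\<close>

type_synonym lframe = "(real \<times> real) \<times> real \<times> real"

definition cor :: "lframe \<Rightarrow> real \<times> real" where
  "cor L = fst L"

definition hlen :: "lframe \<Rightarrow> real" where
  "hlen L = fst (snd L)"

definition vlen :: "lframe \<Rightarrow> real" where
  "vlen L = snd (snd L)"

definition lset :: "lframe \<Rightarrow> (real \<times> real) set" where
  "lset L = closed_segment (cor L) (cor L + (hlen L, 0))
          \<union> closed_segment (cor L) (cor L + (0, vlen L))"

definition anchored_above :: "real \<Rightarrow> lframe \<Rightarrow> bool" where
  "anchored_above c L \<longleftrightarrow> cor L \<in> lineD c \<and> hlen L > 0 \<and> vlen L > 0"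

definition intersects :: "lframe \<Rightarrow> lframe \<Rightarrow> bool" where
  "intersects L1 L2 \<longleftrightarrow> lset L1 \<inter> lset L2 \<noteq> {}"

definition from_left :: "lframe \<Rightarrow> lframe \<Rightarrow> bool" where
  "from_left L1 L2 \<longleftrightarrow> intersects L1 L2 \<and> fst (cor L1) \<le> fst (cor L2)"

definition from_below :: "lframe \<Rightarrow> lframe \<Rightarrow> bool" where
  "from_below L1 L2 \<longleftrightarrow> intersects L1 L2 \<and> fst (cor L1) \<ge> fst (cor L2)"

definition ig_adj :: "lframe set \<Rightarrow> lframe \<Rightarrow> lframe \<Rightarrow> bool" where
  "ig_adj V u v \<longleftrightarrow> u \<in> V \<and> v \<in> V \<and> u \<noteq> v \<and> intersects u v"

definition dominating :: "lframe set \<Rightarrow> lframe set \<Rightarrow> bool" where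
  "dominating V S \<longleftrightarrow> S \<subseteq> V \<and> (\<forall>u\<in>V. u \<notin> S \<longrightarrow> (\<exists>s\<in>S. ig_adj V s u))"

definition valid_selection ::
  "lframe set \<Rightarrow> lframe set \<Rightarrow> lframe set \<Rightarrow> (lframe \<Rightarrow> lframe \<times> lframe) \<Rightarrow> bool" where
  "valid_selection V B R sel \<longleftrightarrow>
     (\<forall>u\<in>V. fst (sel u) \<in> B \<and> snd (sel u) \<in> R
        \<and> intersects (fst (sel u)) u \<and> intersects (snd (sel u)) u
        \<and> (\<forall>b\<in>B. \<forall>r\<in>R. intersects b u \<and> intersects r u \<longrightarrow>
              dist (cor (fst (sel u))) (cor (snd (sel u))) \<le> dist (cor b) (cor r)))"

definition arcs :: "lframe set \<Rightarrow> (lframe \<Rightarrow> lframe \<times> lframe) \<Rightarrow> (lframe \<times> lframe) set" where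
  "arcs V sel = sel ` V"

definition witness ::
  "lframe set \<Rightarrow> (lframe \<Rightarrow> lframe \<times> lframe) \<Rightarrow> lframe \<Rightarrow> lframe \<times> lframe \<Rightarrow> bool" where
  "witness V sel u e \<longleftrightarrow> u \<in> V \<and> sel u = e"

definition top_arc :: "lframe set \<Rightarrow> (lframe \<Rightarrow> lframe \<times> lframe) \<Rightarrow> lframe \<times> lframe \<Rightarrow> bool" where
  "top_arc V sel e \<longleftrightarrow>
     (\<exists>u. witness V sel u e \<and> from_left (fst e) u \<and> from_left (snd e) u)"

definition down_arc :: "lframe set \<Rightarrow> (lframe \<Rightarrow> lframe \<times> lframe) \<Rightarrow> lframe \<times> lframe \<Rightarrow> bool" where
  "down_arc V sel e \<longleftrightarrow> \<not> top_arc V sel e \<and>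
     (\<exists>v. witness V sel v e \<and> from_below (fst e) v \<and> from_below (snd e) v)"

definition mixed_arc :: "lframe set \<Rightarrow> (lframe \<Rightarrow> lframe \<times> lframe) \<Rightarrow> lframe \<times> lframe \<Rightarrow> bool" where
  "mixed_arc V sel e \<longleftrightarrow> e \<in> arcs V sel \<and> \<not> top_arc V sel e \<and> \<not> down_arc V sel e"

definition valid_witness_choice ::
  "lframe set \<Rightarrow> (lframe \<Rightarrow> lframe \<times> lframe) \<Rightarrow> (lframe \<times> lframe \<Rightarrow> lframe) \<Rightarrow> bool" where
  "valid_witness_choice V sel wit \<longleftrightarrow>
     (\<forall>e\<in>arcs V sel. witness V sel (wit e) e
        \<and> (top_arc V sel e \<longrightarrow> from_left (fst e) (wit e) \<and> from_left (snd e) (wit e))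
        \<and> (down_arc V sel e \<longrightarrow> from_below (fst e) (wit e) \<and> from_below (snd e) (wit e)))"

definition upper_half :: "real \<Rightarrow> real \<times> real \<Rightarrow> real \<times> real \<Rightarrow> (real \<times> real) set" where
  "upper_half c P Q = {z. dist z (midpoint P Q) = dist P Q / 2 \<and> fst z + snd z \<ge> c}"

definition lower_half :: "real \<Rightarrow> real \<times> real \<Rightarrow> real \<times> real \<Rightarrow> (real \<times> real) set" where
  "lower_half c P Q = {z. dist z (midpoint P Q) = dist P Q / 2 \<and> fst z + snd z \<le> c}"

definition arc_curve ::
  "real \<Rightarrow> lframe set \<Rightarrow> (lframe \<Rightarrow> lframe \<times> lframe) \<Rightarrow> (lframe \<times> lframe \<Rightarrow> lframe)
     \<Rightarrow> lframe \<times> lframe \<Rightarrow> (real \<times> real) set" where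
  "arc_curve c V sel wit e =
     (if top_arc V sel e then upper_half c (cor (fst e)) (cor (snd e))
      else if down_arc V sel e then lower_half c (cor (fst e)) (cor (snd e))
      else (let w = wit e;
                (p, q) = (if from_left (fst e) w \<and> from_below (snd e) w
                          then (fst e, snd e) else (snd e, fst e))
            in upper_half c (cor p) (cor w) \<union> lower_half c (cor w) (cor q)))"

end

theory Submission
  imports Defs
begin

text \<open>Every arc is a union of half-circles whose diameters join corners on D.  Two half-circles
  on opposite sides of D meet only on D, and two on the same side meet off D only if their
  diameters interleave.  Above D, each half-circle spans an interval of abscissae whose witness
  \<open>u\<close> lies at or right of it and which lies within the closest pair selected for \<open>u\<close>; by
  minimality of that pair, no frame of B \<union> R meeting \<open>u\<close> has its corner strictly inside the pair.
  Since L-frames reach right and up, two interleaving intervals would make an end of one meet the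
  witness of the other strictly inside its pair.  Below D the same argument applies after
  reflection in a perpendicular of D, which exchanges horizontal and vertical.  Finally, common
  points on D are corners, and a corner shared by two arcs is an end of both: the witness \<open>w\<close> of a
  mixed arc lies in neither B nor R, and the arc is the pair selected for \<open>w\<close>.\<close>

section \<open>L-frames anchored on D\<close>

definition Dpt :: "real \<Rightarrow> real \<Rightarrow> real \<times> real" where
  "Dpt c p = (p, c - p)"

definition xpos :: "lframe \<Rightarrow> real" where
  "xpos L = fst (cor L)"

lemma cor_anchored: "anchored_above c L \<Longrightarrow> cor L = Dpt c (xpos L)"
  unfolding anchored_above_def lineD_def xpos_def Dpt_def by (cases "cor L") auto

lemma dist_Dpt: "dist (Dpt c p) (Dpt c q) = sqrt 2 * \<bar>p - q\<bar>"
proof -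
  have "dist (Dpt c p) (Dpt c q) = sqrt (2 * (p - q)\<^sup>2)"
    by (simp add: Dpt_def dist_Pair_Pair dist_real_def power2_commute)
  then show ?thesis
    by (simp add: real_sqrt_mult)
qed

lemma horizontal_segment_iff:
  fixes x y h :: real
  assumes "h \<ge> 0"
  shows "z \<in> closed_segment (x, y) (x + h, y) \<longleftrightarrow> snd z = y \<and> x \<le> fst z \<and> fst z \<le> x + h"
  using assms by (cases z) (auto simp: closed_segment_same_snd closed_segment_eq_real_ivl)

lemma vertical_segment_iff:
  fixes x y h :: real
  assumes "h \<ge> 0"
  shows "z \<in> closed_segment (x, y) (x, y + h) \<longleftrightarrow> fst z = x \<and> y \<le> snd z \<and> snd z \<le> y + h"
  using assms by (cases z) (auto simp: closed_segment_same_fst closed_segment_eq_real_ivl)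

lemma lset_anchored_iff:
  assumes "anchored_above c L"
  shows "z \<in> lset L \<longleftrightarrow>
      snd z = c - xpos L \<and> xpos L \<le> fst z \<and> fst z \<le> xpos L + hlen L
    \<or> fst z = xpos L \<and> c - xpos L \<le> snd z \<and> snd z \<le> c - xpos L + vlen L"
  using assms horizontal_segment_iff[of "hlen L" z "xpos L" "c - xpos L"]
    vertical_segment_iff[of "vlen L" z "xpos L" "c - xpos L"]
  by (auto simp: lset_def cor_anchored[OF assms] Dpt_def anchored_above_def)

lemma intersects_anchored_iff:
  assumes "anchored_above c A" "anchored_above c C" "xpos A < xpos C"
  shows "intersects A C \<longleftrightarrow> xpos C - xpos A \<le> hlen A \<and> xpos C - xpos A \<le> vlen C"
proof
  assume "intersects A C"
  then obtain z where "z \<in> lset A" "z \<in> lset C"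
    unfolding intersects_def by auto
  then show "xpos C - xpos A \<le> hlen A \<and> xpos C - xpos A \<le> vlen C"
    using assms lset_anchored_iff[OF assms(1)] lset_anchored_iff[OF assms(2)] by auto
next
  assume "xpos C - xpos A \<le> hlen A \<and> xpos C - xpos A \<le> vlen C"
  then have "(xpos C, c - xpos A) \<in> lset A \<inter> lset C"
    using assms lset_anchored_iff[OF assms(1)] lset_anchored_iff[OF assms(2)] by auto
  then show "intersects A C"
    unfolding intersects_def by auto
qed

lemma intersects_refl: "intersects A A"
  unfolding intersects_def lset_def by auto

lemma intersects_commute: "intersects A C \<longleftrightarrow> intersects C A"
  unfolding intersects_def by auto

section \<open>Half-circles over D\<close>

definition interleaved :: "real \<Rightarrow> real \<Rightarrow> real \<Rightarrow> real \<Rightarrow> bool" where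
  "interleaved a b a' b' \<longleftrightarrow> a < a' \<and> a' < b \<and> b < b'"

definition half_circle :: "real \<Rightarrow> bool \<Rightarrow> real \<times> real \<Rightarrow> real \<times> real \<Rightarrow> (real \<times> real) set" where
  "half_circle c upper P Q = (if upper then upper_half c P Q else lower_half c P Q)"

lemma half_circle_commute: "half_circle c s P Q = half_circle c s Q P"
  by (simp add: half_circle_def upper_half_def lower_half_def midpoint_sym dist_commute)

lemma half_circle_min_max:
  "half_circle c s (Dpt c p) (Dpt c q) = half_circle c s (Dpt c (min p q)) (Dpt c (max p q))"
  by (cases "p \<le> q") (auto simp: min_def max_def half_circle_commute)

text \<open>The circle over a diameter on D, in the coordinates \<open>(x - y + c) / 2\<close> (abscissa of the
  orthogonal projection onto D) and \<open>x + y - c\<close> (proportional to the signed distance from D).\<close>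
lemma circle_on_D_eq:
  fixes x y :: real
  assumes "dist (x, y) (midpoint (Dpt c p) (Dpt c q)) = dist (Dpt c p) (Dpt c q) / 2"
  shows "((x - y + c) / 2 - p) * ((x - y + c) / 2 - q) = - ((x + y - c)\<^sup>2 / 4)"
proof -
  have "(dist (x, y) (midpoint (Dpt c p) (Dpt c q)))\<^sup>2 = (dist (Dpt c p) (Dpt c q))\<^sup>2 / 4"
    using arg_cong[OF assms, of "\<lambda>t. t\<^sup>2"] by (simp add: power_divide)
  then have "(x - (p + q) / 2)\<^sup>2 + (y - (c - (p + q) / 2))\<^sup>2 = (p - q)\<^sup>2 / 2"
    by (simp add: dist_Dpt power_mult_distrib midpoint_def Dpt_def dist_Pair_Pair dist_real_def
        algebra_simps power2_commute[of q p])
  then show ?thesis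
    by (simp add: power2_eq_square field_simps)
qed

lemma nested_products_eq:
  fixes a b a' b' s :: real
  assumes "a \<le> a'" "b' \<le> b" "a' < s" "s < b'" "(s - a) * (b - s) = (s - a') * (b' - s)"
  shows "a = a' \<and> b = b'"
proof -
  have "(a' - a) * (b - s) + (s - a') * (b - b') = 0"
    using assms(5) by (simp add: algebra_simps)
  moreover have "(a' - a) * (b - s) \<ge> 0" "(s - a') * (b - b') \<ge> 0"
    using assms(1-4) by auto
  ultimately have "(a' - a) * (b - s) = 0" "(s - a') * (b - b') = 0"
    by linarith+
  then show ?thesis
    using assms(1-4) by auto
qed

lemma circles_common_point_off_D:
  fixes a b a' b' s t :: real
  assumes "(s - a) * (s - b) = - t" "(s - a') * (s - b') = - t" "t > 0" "a \<le> b" "a' \<le> b'"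
  shows "interleaved a b a' b' \<or> interleaved a' b' a b \<or> (a, b) = (a', b')"
proof -
  have inside: "a < s \<and> s < b" if "(s - a) * (b - s) > 0" "a \<le> b" for a b
    using that by (auto simp: zero_less_mult_iff)
  have prod_eq: "(s - a) * (b - s) = t" "(s - a') * (b' - s) = t"
    using assms(1,2) by (simp_all add: algebra_simps)
  have "a < s" "s < b" "a' < s" "s < b'"
    using inside[of a b] inside[of a' b'] prod_eq assms(3-5) by auto
  moreover have "a = a' \<and> b = b'" if "a \<le> a' \<and> b' \<le> b \<or> a' \<le> a \<and> b \<le> b'"
    using that nested_products_eq[of a a' b' b s] nested_products_eq[of a' a b b' s] prod_eq
      \<open>a < s\<close> \<open>s < b\<close> \<open>a' < s\<close> \<open>s < b'\<close> by auto
  ultimately show ?thesis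
    unfolding interleaved_def by (cases "a \<le> a' \<and> b' \<le> b \<or> a' \<le> a \<and> b \<le> b'") auto
qed

lemma circle_meets_D_at_ends:
  assumes "dist (x, y) (midpoint (Dpt c p) (Dpt c q)) = dist (Dpt c p) (Dpt c q) / 2"
    and "x + y = c"
  shows "(x, y) = Dpt c p \<or> (x, y) = Dpt c q"
proof -
  have "y = c - x"
    using assms(2) by simp
  then have "(x - p) * (x - q) = 0"
    using circle_on_D_eq[OF assms(1)] by simp
  then show ?thesis
    using assms(2) by (auto simp: Dpt_def)
qed

lemma half_circles_meet_on_D:
  assumes z: "z \<in> half_circle c s (Dpt c a) (Dpt c b)" "z \<in> half_circle c s' (Dpt c a') (Dpt c b')"
    and "a \<le> b" "a' \<le> b'"
    and same_side: "s = s' \<Longrightarrow> \<not> interleaved a b a' b' \<and> \<not> interleaved a' b' a b \<and> (a, b) \<noteq> (a', b')"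
  shows "z \<in> {Dpt c a, Dpt c b} \<inter> {Dpt c a', Dpt c b'}"
proof -
  obtain x y where xy: "z = (x, y)"
    by fastforce
  have circles: "dist (x, y) (midpoint (Dpt c a) (Dpt c b)) = dist (Dpt c a) (Dpt c b) / 2"
    "dist (x, y) (midpoint (Dpt c a') (Dpt c b')) = dist (Dpt c a') (Dpt c b') / 2"
    using z by (auto simp: xy half_circle_def upper_half_def lower_half_def split: if_splits)
  have "x + y = c"
  proof (cases "s = s'")
    case True
    show ?thesis
    proof (rule ccontr)
      assume "x + y \<noteq> c"
      then have "(x + y - c)\<^sup>2 / 4 > 0"
        by simp
      then show False
        using circles_common_point_off_D[OF circle_on_D_eq[OF circles(1)] circle_on_D_eq[OF circles(2)]]
          same_side[OF True] \<open>a \<le> b\<close> \<open>a' \<le> b'\<close> by blast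
    qed
  next
    case False
    then show ?thesis
      using z by (auto simp: xy half_circle_def upper_half_def lower_half_def split: if_splits)
  qed
  then show ?thesis
    using circle_meets_D_at_ends[OF circles(1)] circle_meets_D_at_ends[OF circles(2)] xy by auto
qed

section \<open>Closest pairs along a line\<close>

text \<open>An abstraction of anchored L-frames along D, with \<open>reach_right\<close> the horizontal and
  \<open>reach_up\<close> the vertical length.  Reflection in a perpendicular of D swaps the two reaches, so
  the half-circles below D form a second instance.\<close>
locale closest_pair_line =
  fixes V B R :: "'a set" and sel :: "'a \<Rightarrow> 'a \<times> 'a" and meets :: "'a \<Rightarrow> 'a \<Rightarrow> bool"
    and pos reach_right reach_up :: "'a \<Rightarrow> real"
  assumes meets_iff: "\<And>A C. A \<in> V \<Longrightarrow> C \<in> V \<Longrightarrow> pos A < pos C \<Longrightarrow>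
      meets A C \<longleftrightarrow> pos C - pos A \<le> reach_right A \<and> pos C - pos A \<le> reach_up C"
    and B_subset: "B \<subseteq> V" and R_subset: "R \<subseteq> V"
    and sel_meets: "\<And>u. u \<in> V \<Longrightarrow>
      fst (sel u) \<in> B \<and> snd (sel u) \<in> R \<and> meets (fst (sel u)) u \<and> meets (snd (sel u)) u"
    and sel_closest: "\<And>u b r. u \<in> V \<Longrightarrow> b \<in> B \<Longrightarrow> r \<in> R \<Longrightarrow> meets b u \<Longrightarrow> meets r u \<Longrightarrow>
      \<bar>pos (fst (sel u)) - pos (snd (sel u))\<bar> \<le> \<bar>pos b - pos r\<bar>"
begin

abbreviation sel_lo :: "'a \<Rightarrow> real" where
  "sel_lo u \<equiv> min (pos (fst (sel u))) (pos (snd (sel u)))"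

abbreviation sel_hi :: "'a \<Rightarrow> real" where
  "sel_hi u \<equiv> max (pos (fst (sel u))) (pos (snd (sel u)))"

lemma no_meeting_frame_inside_sel:
  assumes "u \<in> V" "Y \<in> B \<union> R" "meets Y u"
  shows "\<not> (sel_lo u < pos Y \<and> pos Y < sel_hi u)"
proof
  assume inside: "sel_lo u < pos Y \<and> pos Y < sel_hi u"
  from assms(2) show False
  proof
    assume "Y \<in> B"
    then have "\<bar>pos (fst (sel u)) - pos (snd (sel u))\<bar> \<le> \<bar>pos Y - pos (snd (sel u))\<bar>"
      using sel_closest sel_meets assms(1,3) by blast
    then show False
      using inside by (auto simp: min_def max_def split: if_splits)
  next
    assume "Y \<in> R"
    then have "\<bar>pos (fst (sel u)) - pos (snd (sel u))\<bar> \<le> \<bar>pos (fst (sel u)) - pos Y\<bar>"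
      using sel_closest sel_meets assms(1,3) by blast
    then show False
      using inside by (auto simp: min_def max_def split: if_splits)
  qed
qed

text \<open>Each upper half-circle of the drawing spans such an interval, with the arc's witness as
  \<open>u\<close>.\<close>
definition witnessed_interval :: "'a \<Rightarrow> real \<Rightarrow> real \<Rightarrow> bool" where
  "witnessed_interval u a b \<longleftrightarrow> u \<in> V \<and> a < b \<and> b \<le> pos u \<and> sel_lo u \<le> a \<and> b \<le> sel_hi u
     \<and> (\<exists>A\<in>B \<union> R. pos A = a \<and> meets A u) \<and> (b = pos u \<or> (\<exists>C\<in>B \<union> R. pos C = b \<and> meets C u))"

lemma selected_pair_interval:
  assumes "u \<in> V" "pos (fst (sel u)) \<le> pos u" "pos (snd (sel u)) \<le> pos u"
    "pos (fst (sel u)) \<noteq> pos (snd (sel u))"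
  shows "witnessed_interval u (sel_lo u) (sel_hi u)"
  using assms sel_meets[OF assms(1)] unfolding witnessed_interval_def min_def max_def by auto

lemma selected_end_interval:
  assumes "u \<in> V" "Y \<in> {fst (sel u), snd (sel u)}" "pos Y < pos u" "pos u \<le> sel_hi u"
  shows "witnessed_interval u (pos Y) (pos u)"
  using assms sel_meets[OF assms(1)] unfolding witnessed_interval_def by auto

text \<open>If the intervals interleaved, the witness further to the left would be met by an end of the
  other interval lying strictly inside its selected pair.\<close>
lemma witnessed_intervals_not_interleaved:
  assumes I1: "witnessed_interval u1 a1 b1" and I2: "witnessed_interval u2 a2 b2"
  shows "\<not> interleaved a1 b1 a2 b2"
proof
  assume cross: "interleaved a1 b1 a2 b2"
  obtain A1 where A1: "A1 \<in> B \<union> R" "pos A1 = a1" "meets A1 u1"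
    using I1 by (auto simp: witnessed_interval_def)
  obtain A2 where A2: "A2 \<in> B \<union> R" "pos A2 = a2" "meets A2 u2"
    using I2 by (auto simp: witnessed_interval_def)
  have V: "u1 \<in> V" "u2 \<in> V" "A1 \<in> V" "A2 \<in> V"
    using I1 I2 A1 A2 B_subset R_subset by (auto simp: witnessed_interval_def)
  have reach1: "pos u1 - a1 \<le> reach_right A1 \<and> pos u1 - a1 \<le> reach_up u1"
    using meets_iff[OF V(3,1)] A1 I1 by (auto simp: witnessed_interval_def)
  have reach2: "pos u2 - a2 \<le> reach_right A2 \<and> pos u2 - a2 \<le> reach_up u2"
    using meets_iff[OF V(4,2)] A2 I2 cross by (auto simp: witnessed_interval_def interleaved_def)
  show False
  proof (cases "pos u1 \<le> pos u2")
    case True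
    then have "meets A2 u1"
      using meets_iff[OF V(4,1)] A2 reach1 reach2 I1 cross
      by (auto simp: witnessed_interval_def interleaved_def)
    then show False
      using no_meeting_frame_inside_sel[OF V(1) A2(1)] A2 I1 cross
      by (auto simp: witnessed_interval_def interleaved_def)
  next
    case False
    then have "b1 \<noteq> pos u1"
      using I2 cross by (auto simp: witnessed_interval_def interleaved_def)
    then obtain C1 where C1: "C1 \<in> B \<union> R" "pos C1 = b1" "meets C1 u1"
      using I1 by (auto simp: witnessed_interval_def)
    have "C1 \<in> V"
      using C1 B_subset R_subset by auto
    have "pos u1 - b1 \<le> reach_right C1"
      using meets_iff[OF \<open>C1 \<in> V\<close> V(1)] C1 I1 \<open>b1 \<noteq> pos u1\<close> by (auto simp: witnessed_interval_def)
    then have "meets C1 u2"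
      using meets_iff[OF \<open>C1 \<in> V\<close> V(2)] C1 reach2 False I2 cross
      by (auto simp: witnessed_interval_def interleaved_def)
    then show False
      using no_meeting_frame_inside_sel[OF V(2) C1(1)] C1 I2 cross
      by (auto simp: witnessed_interval_def interleaved_def)
  qed
qed

end

section \<open>The drawing\<close>

lemma min_max_eq_iff_doubleton_eq:
  fixes a b a' b' :: "'a :: linorder"
  shows "(min a b, max a b) = (min a' b', max a' b') \<longleftrightarrow> {a, b} = {a', b'}"
  by (auto simp: min_def max_def doubleton_eq_iff)

locale lframe_drawing =
  fixes c :: real and V B R :: "lframe set"
    and sel :: "lframe \<Rightarrow> lframe \<times> lframe" and wit :: "lframe \<times> lframe \<Rightarrow> lframe"
  assumes anchored: "\<And>L. L \<in> V \<Longrightarrow> anchored_above c L"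
    and cor_inj: "inj_on cor V"
    and B_subset: "B \<subseteq> V" and R_subset: "R \<subseteq> V" and B_R_disjoint: "B \<inter> R = {}"
    and selection: "valid_selection V B R sel"
    and witness_choice: "valid_witness_choice V sel wit"
begin

lemma xpos_inj: "inj_on xpos V"
  using cor_inj by (auto simp: inj_on_def cor_anchored[OF anchored])

lemma sel_meets_witness: "u \<in> V \<Longrightarrow> fst (sel u) \<in> B \<and> snd (sel u) \<in> R
    \<and> intersects (fst (sel u)) u \<and> intersects (snd (sel u)) u"
  using selection by (auto simp: valid_selection_def)

lemma sel_closest_xpos:
  assumes "u \<in> V" "b \<in> B" "r \<in> R" "intersects b u" "intersects r u"
  shows "\<bar>xpos (fst (sel u)) - xpos (snd (sel u))\<bar> \<le> \<bar>xpos b - xpos r\<bar>"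
proof -
  have "dist (cor (fst (sel u))) (cor (snd (sel u))) \<le> dist (cor b) (cor r)"
    using assms selection by (auto simp: valid_selection_def)
  moreover have "fst (sel u) \<in> V" "snd (sel u) \<in> V" "b \<in> V" "r \<in> V"
    using sel_meets_witness[OF assms(1)] assms B_subset R_subset by auto
  ultimately show ?thesis
    by (simp add: cor_anchored[OF anchored] dist_Dpt)
qed

sublocale up: closest_pair_line V B R sel intersects xpos hlen vlen
  using intersects_anchored_iff[OF anchored anchored] B_subset R_subset sel_meets_witness sel_closest_xpos
  by unfold_locales auto

sublocale down: closest_pair_line V B R sel intersects "\<lambda>L. - xpos L" vlen hlen
proof
  fix A C
  assume "A \<in> V" "C \<in> V" "- xpos A < - xpos C"
  then show "intersects A C \<longleftrightarrow> - xpos C - - xpos A \<le> vlen A \<and> - xpos C - - xpos A \<le> hlen C"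
    using intersects_anchored_iff[OF anchored anchored, of C A] intersects_commute by auto
qed (use B_subset R_subset sel_meets_witness sel_closest_xpos in \<open>auto simp: abs_minus_commute\<close>)

lemma arc_props:
  assumes "e \<in> arcs V sel"
  shows "fst e \<in> B" "snd e \<in> R" "wit e \<in> V" "sel (wit e) = e"
proof -
  show "wit e \<in> V" "sel (wit e) = e"
    using witness_choice assms by (auto simp: valid_witness_choice_def witness_def)
  then show "fst e \<in> B" "snd e \<in> R"
    using sel_meets_witness by metis+
qed

lemma arc_ends_xpos_distinct:
  assumes "e \<in> arcs V sel"
  shows "xpos (fst e) \<noteq> xpos (snd e)"
  using arc_props[OF assms] B_subset R_subset B_R_disjoint xpos_inj
  by (metis disjoint_iff inj_onD subsetD)

definition mixed_ends :: "lframe \<times> lframe \<Rightarrow> lframe \<times> lframe" where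
  "mixed_ends e = (if from_left (fst e) (wit e) \<and> from_below (snd e) (wit e) then (fst e, snd e)
     else (snd e, fst e))"

lemma mixed_arc_ends:
  assumes e: "e \<in> arcs V sel" and "\<not> top_arc V sel e" "\<not> down_arc V sel e"
    and pq: "mixed_ends e = (p, q)"
  shows "{p, q} = {fst e, snd e}" "xpos p < xpos (wit e)" "xpos (wit e) < xpos q"
proof -
  have w: "witness V sel (wit e) e"
    using arc_props[OF e] by (simp add: witness_def)
  then have "\<not> (from_left (fst e) (wit e) \<and> from_left (snd e) (wit e))"
    "\<not> (from_below (fst e) (wit e) \<and> from_below (snd e) (wit e))"
    using assms(2,3) unfolding top_arc_def down_arc_def by blast+
  moreover have "intersects (fst e) (wit e)" "intersects (snd e) (wit e)"
    using sel_meets_witness arc_props[OF e] by metis+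
  ultimately show "{p, q} = {fst e, snd e}" "xpos p < xpos (wit e)" "xpos (wit e) < xpos q"
    using pq by (auto simp: mixed_ends_def from_left_def from_below_def xpos_def split: if_splits)
qed

text \<open>A witness of a mixed arc lies strictly between the two corners of its selected pair, so
  by the minimality of that pair it cannot itself belong to B or R.\<close>
lemma mixed_witness_unselected:
  assumes e: "e \<in> arcs V sel" and "\<not> top_arc V sel e" "\<not> down_arc V sel e"
  shows "wit e \<notin> B \<union> R"
proof
  assume "wit e \<in> B \<union> R"
  obtain p q where pq: "mixed_ends e = (p, q)"
    by (cases "mixed_ends e")
  show False
    using up.no_meeting_frame_inside_sel[OF arc_props(3)[OF e] \<open>wit e \<in> B \<union> R\<close> intersects_refl]
      mixed_arc_ends[OF assms pq] arc_props(4)[OF e]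
    by (auto simp: doubleton_eq_iff min_def max_def)
qed

definition arc_pieces :: "lframe \<times> lframe \<Rightarrow> (bool \<times> lframe \<times> lframe) set" where
  "arc_pieces e = (if top_arc V sel e then {(True, fst e, snd e)}
     else if down_arc V sel e then {(False, fst e, snd e)}
     else (case mixed_ends e of (p, q) \<Rightarrow> {(True, p, wit e), (False, wit e, q)}))"

lemma arc_curve_pieces:
  "arc_curve c V sel wit e = (\<Union>(s, A, C)\<in>arc_pieces e. half_circle c s (cor A) (cor C))"
  unfolding arc_curve_def arc_pieces_def mixed_ends_def half_circle_def Let_def
  by (auto split: prod.splits if_splits)

lemma arc_pieceE:
  assumes "(s, A, C) \<in> arc_pieces e"
  obtains (top) "top_arc V sel e" "s" "A = fst e" "C = snd e"
    | (down) "\<not> top_arc V sel e" "down_arc V sel e" "\<not> s" "A = fst e" "C = snd e"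
    | (mixed_up) q where "\<not> top_arc V sel e" "\<not> down_arc V sel e" "mixed_ends e = (A, q)"
        "s" "C = wit e"
    | (mixed_down) p where "\<not> top_arc V sel e" "\<not> down_arc V sel e" "mixed_ends e = (p, C)"
        "\<not> s" "A = wit e"
  using assms by (cases "mixed_ends e") (auto simp: arc_pieces_def split: if_splits)

lemma piece_frames:
  assumes e: "e \<in> arcs V sel" and piece: "(s, A, C) \<in> arc_pieces e" and F: "F \<in> {A, C}"
  shows "F \<in> V \<and> (F \<in> {fst e, snd e} \<or> F \<notin> B \<union> R \<and> sel F = e)"
proof -
  have ends: "fst e \<in> V" "snd e \<in> V"
    using arc_props[OF e] B_subset R_subset by auto
  have mixed: "F \<in> V \<and> (F \<in> {fst e, snd e} \<or> F \<notin> B \<union> R \<and> sel F = e)"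
    if "\<not> top_arc V sel e" "\<not> down_arc V sel e" "mixed_ends e = (p, q)" "F \<in> {p, wit e, q}"
    for p q
    using that ends mixed_arc_ends(1)[OF e that(1-3)] mixed_witness_unselected[OF e that(1,2)]
      arc_props(3,4)[OF e] by (auto simp: doubleton_eq_iff)
  from piece show ?thesis
  proof (cases rule: arc_pieceE)
    case (mixed_up q)
    then show ?thesis
      using mixed[of A q] F by auto
  next
    case (mixed_down p)
    then show ?thesis
      using mixed[of p C] F by auto
  qed (use F ends in auto)
qed

lemma piece_ends_xpos_distinct:
  assumes e: "e \<in> arcs V sel" and "(s, A, C) \<in> arc_pieces e"
  shows "xpos A \<noteq> xpos C"
  using assms(2)
proof (cases rule: arc_pieceE)
  case (mixed_up q)
  then show ?thesis
    using mixed_arc_ends(2)[OF e] by auto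
next
  case (mixed_down p)
  then show ?thesis
    using mixed_arc_ends(3)[OF e] by auto
qed (use arc_ends_xpos_distinct[OF e] in auto)

definition side_interval :: "bool \<Rightarrow> lframe \<Rightarrow> real \<Rightarrow> real \<Rightarrow> bool" where
  "side_interval upper u a b \<longleftrightarrow>
     (if upper then up.witnessed_interval u a b else down.witnessed_interval u (- b) (- a))"

lemma side_intervals_not_interleaved:
  assumes "side_interval s u a b" "side_interval s u' a' b'"
  shows "\<not> interleaved a b a' b'"
proof (cases s)
  case True
  then show ?thesis
    using assms up.witnessed_intervals_not_interleaved by (auto simp: side_interval_def)
next
  case False
  then have "\<not> interleaved (- b') (- a') (- b) (- a)"
    using assms down.witnessed_intervals_not_interleaved by (auto simp: side_interval_def)
  then show ?thesis
    by (auto simp: interleaved_def)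
qed

lemma piece_side_interval:
  assumes e: "e \<in> arcs V sel" and piece: "(s, A, C) \<in> arc_pieces e"
  shows "side_interval s (wit e) (min (xpos A) (xpos C)) (max (xpos A) (xpos C))"
  using piece
proof (cases rule: arc_pieceE)
  case top
  then have "xpos A \<le> xpos (wit e)" "xpos C \<le> xpos (wit e)"
    using witness_choice e by (auto simp: valid_witness_choice_def from_left_def xpos_def)
  then have "up.witnessed_interval (wit e) (up.sel_lo (wit e)) (up.sel_hi (wit e))"
    using up.selected_pair_interval[OF arc_props(3)[OF e]] top arc_props(4)[OF e]
      arc_ends_xpos_distinct[OF e] by simp
  then show ?thesis
    using top arc_props(4)[OF e] by (simp add: side_interval_def)
next
  case down
  then have "xpos (wit e) \<le> xpos A" "xpos (wit e) \<le> xpos C"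
    using witness_choice e by (auto simp: valid_witness_choice_def from_below_def xpos_def)
  then have "down.witnessed_interval (wit e) (down.sel_lo (wit e)) (down.sel_hi (wit e))"
    using down.selected_pair_interval[OF arc_props(3)[OF e]] down arc_props(4)[OF e]
      arc_ends_xpos_distinct[OF e] by simp
  then show ?thesis
    using down arc_props(4)[OF e] by (simp add: side_interval_def minus_max_eq_min minus_min_eq_max)
next
  case (mixed_up q)
  note ends = mixed_arc_ends[OF e mixed_up(1-3)]
  have "up.witnessed_interval (wit e) (xpos A) (xpos (wit e))"
    using up.selected_end_interval[OF arc_props(3)[OF e], of A] ends arc_props(4)[OF e]
    by (auto simp: doubleton_eq_iff)
  then show ?thesis
    using mixed_up ends by (simp add: side_interval_def)
next
  case (mixed_down p)
  note ends = mixed_arc_ends[OF e mixed_down(1-3)]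
  have "down.witnessed_interval (wit e) (- xpos C) (- xpos (wit e))"
    using down.selected_end_interval[OF arc_props(3)[OF e], of C] ends arc_props(4)[OF e]
    by (auto simp: doubleton_eq_iff)
  then show ?thesis
    using mixed_down ends by (simp add: side_interval_def)
qed

lemma shared_frame_is_common_end:
  assumes e1: "e1 \<in> arcs V sel" and e2: "e2 \<in> arcs V sel" and "e1 \<noteq> e2"
    and "(s1, A1, C1) \<in> arc_pieces e1" "(s2, A2, C2) \<in> arc_pieces e2"
    and "F \<in> {A1, C1}" "F \<in> {A2, C2}"
  shows "F \<in> {fst e1, snd e1} \<inter> {fst e2, snd e2}"
  using piece_frames[OF e1 assms(4,6)] piece_frames[OF e2 assms(5,7)] assms(3)
    arc_props(1,2)[OF e1] arc_props(1,2)[OF e2] by auto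

lemma pieces_of_distinct_arcs_differ:
  assumes e1: "e1 \<in> arcs V sel" and e2: "e2 \<in> arcs V sel" and "e1 \<noteq> e2"
    and p1: "(s1, A1, C1) \<in> arc_pieces e1" and p2: "(s2, A2, C2) \<in> arc_pieces e2"
  shows "{A1, C1} \<noteq> {A2, C2}"
proof
  assume same: "{A1, C1} = {A2, C2}"
  then have common: "{A1, C1} \<subseteq> {fst e1, snd e1} \<inter> {fst e2, snd e2}"
    using shared_frame_is_common_end[OF e1 e2 \<open>e1 \<noteq> e2\<close> p1 p2] by auto
  have "A1 \<noteq> C1"
    using piece_ends_xpos_distinct[OF e1 p1] by auto
  then have "{fst e1, snd e1} = {fst e2, snd e2}"
    using common by (auto simp: doubleton_eq_iff)
  then have "fst e1 = fst e2 \<and> snd e1 = snd e2"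
    using arc_props(1,2)[OF e1] arc_props(1,2)[OF e2] B_R_disjoint by (auto simp: doubleton_eq_iff)
  then show False
    using \<open>e1 \<noteq> e2\<close> by (simp add: prod_eq_iff)
qed

lemma pieces_meet_at_common_end:
  assumes e1: "e1 \<in> arcs V sel" and e2: "e2 \<in> arcs V sel" and "e1 \<noteq> e2"
    and p1: "(s1, A1, C1) \<in> arc_pieces e1" and p2: "(s2, A2, C2) \<in> arc_pieces e2"
    and z: "z \<in> half_circle c s1 (cor A1) (cor C1)" "z \<in> half_circle c s2 (cor A2) (cor C2)"
  shows "z \<in> cor ` ({fst e1, snd e1} \<inter> {fst e2, snd e2})"
proof -
  define a1 b1 a2 b2 where bounds:
    "a1 = min (xpos A1) (xpos C1)" "b1 = max (xpos A1) (xpos C1)"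
    "a2 = min (xpos A2) (xpos C2)" "b2 = max (xpos A2) (xpos C2)"
  have V: "A1 \<in> V" "C1 \<in> V" "A2 \<in> V" "C2 \<in> V"
    using piece_frames[OF e1 p1] piece_frames[OF e2 p2] by blast+
  have corners: "{Dpt c a1, Dpt c b1} = cor ` {A1, C1}" "{Dpt c a2, Dpt c b2} = cor ` {A2, C2}"
    using V by (auto simp: bounds min_def max_def cor_anchored[OF anchored])
  have "(a1, b1) \<noteq> (a2, b2)"
    using pieces_of_distinct_arcs_differ[OF e1 e2 \<open>e1 \<noteq> e2\<close> p1 p2] V
      inj_on_image_eq_iff[OF xpos_inj, of "{A1, C1}" "{A2, C2}"]
    by (auto simp: bounds min_max_eq_iff_doubleton_eq)
  moreover have "s1 = s2 \<Longrightarrow> \<not> interleaved a1 b1 a2 b2 \<and> \<not> interleaved a2 b2 a1 b1"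
    using piece_side_interval[OF e1 p1] piece_side_interval[OF e2 p2]
      side_intervals_not_interleaved unfolding bounds by blast
  moreover have "z \<in> half_circle c s1 (Dpt c a1) (Dpt c b1)" "z \<in> half_circle c s2 (Dpt c a2) (Dpt c b2)"
    using z V half_circle_min_max by (simp_all add: bounds cor_anchored[OF anchored])
  moreover have "a1 \<le> b1" "a2 \<le> b2"
    by (simp_all add: bounds)
  ultimately have "z \<in> {Dpt c a1, Dpt c b1} \<inter> {Dpt c a2, Dpt c b2}"
    by (intro half_circles_meet_on_D) auto
  then have "z \<in> cor ` {A1, C1} \<inter> cor ` {A2, C2}"
    using corners by simp
  then obtain F1 F2 where "F1 \<in> {A1, C1}" "F2 \<in> {A2, C2}" "z = cor F1" "z = cor F2"
    by blast
  moreover have "F1 = F2"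
    using calculation V cor_inj by (auto dest: inj_onD)
  ultimately show ?thesis
    using shared_frame_is_common_end[OF e1 e2 \<open>e1 \<noteq> e2\<close> p1 p2] by blast
qed

end

theorem mainTheorem4:
  fixes c :: real and V B R :: "lframe set"
    and sel :: "lframe \<Rightarrow> lframe \<times> lframe" and wit :: "lframe \<times> lframe \<Rightarrow> lframe"
  assumes "finite V"
    and "\<forall>L\<in>V. anchored_above c L"
    and "inj_on cor V"
    and "dominating V B" and "dominating V R" and "B \<inter> R = {}"
    and "valid_selection V B R sel"
    and "valid_witness_choice V sel wit"
  shows "\<forall>e1\<in>arcs V sel. \<forall>e2\<in>arcs V sel. e1 \<noteq> e2 \<longrightarrow>
           arc_curve c V sel wit e1 \<inter> arc_curve c V sel wit e2
             \<subseteq> cor ` ({fst e1, snd e1} \<inter> {fst e2, snd e2})"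
proof (intro ballI impI subsetI)
  interpret lframe_drawing c V B R sel wit
    using assms(2-8) by unfold_locales (auto simp: dominating_def)
  fix e1 e2 z
  assume e: "e1 \<in> arcs V sel" "e2 \<in> arcs V sel" "e1 \<noteq> e2"
    and "z \<in> arc_curve c V sel wit e1 \<inter> arc_curve c V sel wit e2"
  then obtain s1 A1 C1 s2 A2 C2 where
    "(s1, A1, C1) \<in> arc_pieces e1" "z \<in> half_circle c s1 (cor A1) (cor C1)"
    "(s2, A2, C2) \<in> arc_pieces e2" "z \<in> half_circle c s2 (cor A2) (cor C2)"
    unfolding arc_curve_pieces by blast
  then show "z \<in> cor ` ({fst e1, snd e1} \<inter> {fst e2, snd e2})"
    using pieces_meet_at_common_end[OF e] by blast
qed

end
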